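(* For $n=0,1,2,\dots$ let $H_n$ denote the $n$-th (physicists') Hermite polynomial and define $h_n(x)=e^{-x^2}\left[H_{n+1}^2(x)-H_n(x)H_{n+2}(x)\right]$ for $x\in\mathbb{R}$. Then $h_n$ is positive on $\mathbb{R}$ and satisfies, for all $x\in\mathbb{R}$, \[ h_n(x)\le\begin{cases}\dfrac{4^{n+1}}{2\pi}\,\dfrac{2n+3}{n+1}\,\Gamma^2\!\left(\frac n2+1\right), & n\text{ odd},\\[3ex] \dfrac{4^{n+1}}{2\pi}\,(n+1)\,\Gamma^2\!\left(\frac{n+1}{2}\right), & n\text{ even}.\end{cases} \]
   Context: The physicists' Hermite polynomials are defined by $H_0(x)=1$, $H_1(x)=2x$, $H_{n+1}(x)=2xH_n(x)-2nH_{n-1}(x)$; equivalently $H_n(x)=(-1)^ne^{x^2}\frac{d^n}{dx^n}e^{-x^2}$. $\Gamma$ denotes the Gamma function. *)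

theory Defs
  imports "HOL-Analysis.Analysis"
begin

fun hermite :: "nat \<Rightarrow> real \<Rightarrow> real" where
  "hermite 0 x = 1"
| "hermite (Suc 0) x = 2 * x"
| "hermite (Suc (Suc n)) x = 2 * x * hermite (Suc n) x - 2 * real (Suc n) * hermite n x"

definition turan_h :: "nat \<Rightarrow> real \<Rightarrow> real" where
  "turan_h n x = exp (- (x^2)) * ((hermite (Suc n) x)^2 - hermite n x * hermite (Suc (Suc n)) x)"

end

theory Submission
  imports Defs
begin

text \<open>Write \<open>D n x = H (n+1) x ^ 2 - H n x * H (n+2) x\<close>. The recurrence gives
\<open>D (n+1) = 2 (n+1) D n + 2 H (n+1) ^ 2\<close>, so \<open>D n > 0\<close> by induction from \<open>D 0 = 2\<close>.
For the upper bound, \<open>h n\<close> is dominated by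
\<open>F n x = h n x + exp (-x^2) H (n+1) x ^ 2 / (2n+2)\<close>, whose derivative
\<open>-x exp (-x^2) H (n+1) x ^ 2 / (n+1)\<close> changes sign only at \<open>0\<close>. Hence
\<open>h n x \<le> F n 0\<close>, and \<open>F n 0\<close> is evaluated using \<open>H (2m+1) 0 = 0\<close>,
\<open>H (n+2) 0 = -2 (n+1) H n 0\<close> and \<open>H (2m) 0 ^ 2 = 4^(2m) \<Gamma>(m + 1/2)^2 / \<pi>\<close>.\<close>

lemma hermite_has_real_derivative:
  "(hermite n has_real_derivative (2 * x * hermite n x - hermite (Suc n) x)) (at x)"
proof (induction n x rule: hermite.induct)
  case (1 x)
  have "hermite 0 = (\<lambda>_. 1)" by (rule ext) simp
  then show ?case by (auto intro!: derivative_eq_intros)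
next
  case (2 x)
  have "hermite (Suc 0) = (\<lambda>x. 2 * x)" by (rule ext) simp
  then show ?case by (auto intro!: derivative_eq_intros simp: algebra_simps)
next
  case (3 n x)
  have "hermite (Suc (Suc n)) = (\<lambda>x. 2 * x * hermite (Suc n) x - 2 * real (Suc n) * hermite n x)"
    by (rule ext) simp
  then show ?case
    by (auto intro!: derivative_eq_intros 3 simp: algebra_simps)
qed

lemma turan_difference_Suc:
  "hermite (Suc (Suc n)) x ^ 2 - hermite (Suc n) x * hermite (Suc (Suc (Suc n))) x
     = 2 * real (Suc n) * (hermite (Suc n) x ^ 2 - hermite n x * hermite (Suc (Suc n)) x)
       + 2 * hermite (Suc n) x ^ 2"
  by (simp only: hermite.simps) (simp add: algebra_simps power2_eq_square)

lemma turan_difference_pos: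
  "hermite (Suc n) x ^ 2 - hermite n x * hermite (Suc (Suc n)) x > 0"
proof (induction n)
  case 0
  then show ?case by (simp add: power2_eq_square)
next
  case (Suc n)
  have "2 * real (Suc n) * (hermite (Suc n) x ^ 2 - hermite n x * hermite (Suc (Suc n)) x) > 0"
    using Suc.IH by simp
  then show ?case
    unfolding turan_difference_Suc by (simp add: add_pos_nonneg)
qed

lemma turan_h_pos: "turan_h n x > 0"
  unfolding turan_h_def using turan_difference_pos by simp

definition turan_majorant :: "nat \<Rightarrow> real \<Rightarrow> real" where
  "turan_majorant n x = turan_h n x + exp (- (x^2)) * hermite (Suc n) x ^ 2 / (2 * real n + 2)"

lemma turan_h_le_majorant: "turan_h n x \<le> turan_majorant n x"
  unfolding turan_majorant_def by simp

lemma turan_h_has_real_derivative: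
  "(turan_h n has_real_derivative - 2 * exp (- (x^2)) * hermite n x * hermite (Suc n) x) (at x)"
  unfolding turan_h_def[abs_def]
  apply (rule derivative_eq_intros refl hermite_has_real_derivative)+
  apply (simp only: hermite.simps)
  apply (simp add: algebra_simps power2_eq_square)
  done

lemma exp_hermite_squared_has_real_derivative:
  "((\<lambda>x. exp (- (x^2)) * hermite (Suc n) x ^ 2) has_real_derivative
     exp (- (x^2)) * (4 * real (Suc n) * hermite n x * hermite (Suc n) x
       - 2 * x * hermite (Suc n) x ^ 2)) (at x)"
  apply (rule derivative_eq_intros refl hermite_has_real_derivative)+
  apply (simp only: hermite.simps)
  apply (simp add: algebra_simps power2_eq_square)
  done

text \<open>The weight \<open>1 / (2n+2)\<close> is chosen so that the mixed terms
\<open>H\<^sub>n H\<^sub>n\<^sub>+\<^sub>1\<close> of the two derivatives above cancel.\<close>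
lemma turan_majorant_has_real_derivative:
  "(turan_majorant n has_real_derivative
     (- x * exp (- (x^2)) * hermite (Suc n) x ^ 2 / (real n + 1))) (at x)"
proof -
  have "(turan_majorant n has_real_derivative
      - 2 * exp (- (x^2)) * hermite n x * hermite (Suc n) x
      + exp (- (x^2)) * (4 * real (Suc n) * hermite n x * hermite (Suc n) x
          - 2 * x * hermite (Suc n) x ^ 2) / (2 * real n + 2)) (at x)"
    unfolding turan_majorant_def[abs_def]
    by (intro DERIV_add DERIV_cdivide turan_h_has_real_derivative
        exp_hermite_squared_has_real_derivative)
  then show ?thesis
    by (rule DERIV_cong) (simp add: field_simps add_pos_pos)
qed

lemma DERIV_sign_change_imp_global_max:
  fixes f f' :: "real \<Rightarrow> real"
  assumes deriv: "\<And>t. (f has_real_derivative f' t) (at t)"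
    and sign: "\<And>t. (t - a) * f' t \<le> 0"
  shows "f x \<le> f a"
proof (cases x a rule: linorder_cases)
  case less
  then obtain z where z: "x < z" "z < a" "f a - f x = (a - x) * f' z"
    using MVT2[OF less deriv] by blast
  from sign[of z] z(2) have "f' z \<ge> 0" by (simp add: mult_le_0_iff)
  with less have "(a - x) * f' z \<ge> 0" by simp
  with z show ?thesis by simp
next
  case greater
  then obtain z where z: "a < z" "z < x" "f x - f a = (x - a) * f' z"
    using MVT2[OF greater deriv] by blast
  from sign[of z] z(1) have "f' z \<le> 0" by (simp add: mult_le_0_iff)
  with greater have "(x - a) * f' z \<le> 0" by (simp add: mult_nonneg_nonpos)
  with z show ?thesis by simp
qed simp

lemma turan_majorant_le_at_zero: "turan_majorant n x \<le> turan_majorant n 0"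
proof (rule DERIV_sign_change_imp_global_max[OF turan_majorant_has_real_derivative])
  fix t :: real
  have "t * t * exp (- (t^2)) * hermite (Suc n) t ^ 2 / (real n + 1) \<ge> 0" by simp
  then show "(t - 0) * (- t * exp (- (t^2)) * hermite (Suc n) t ^ 2 / (real n + 1)) \<le> 0"
    by (simp add: algebra_simps)
qed

lemma hermite_odd_at_zero: "hermite (Suc (2 * m)) 0 = 0"
  by (induction m) (simp_all add: numeral_2_eq_2)

lemma hermite_even_at_zero_squared:
  "hermite (2 * m) 0 ^ 2 = 4 ^ (2 * m) / pi * Gamma (real m + 1/2) ^ 2"
proof (induction m)
  case 0
  then show ?case by (simp add: Gamma_one_half_real)
next
  case (Suc m)
  have "real m + 1/2 \<notin> \<int>\<^sub>\<le>\<^sub>0"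
    using nonpos_Ints_nonpos by fastforce
  then have Gamma: "Gamma (real (Suc m) + 1/2) = (real m + 1/2) * Gamma (real m + 1/2)"
    using Gamma_plus1[of "real m + 1/2"] by (simp add: algebra_simps)
  have "2 * Suc m = Suc (Suc (2 * m))" by simp
  then have "hermite (2 * Suc m) 0 = - 2 * real (Suc (2 * m)) * hermite (2 * m) 0"
    by (simp only: hermite.simps)
  then have "hermite (2 * Suc m) 0 ^ 2 = 4 * real (Suc (2 * m)) ^ 2 * hermite (2 * m) 0 ^ 2"
    by (simp add: power2_eq_square algebra_simps)
  also have "\<dots> = 4 ^ (2 * Suc m) / pi * Gamma (real (Suc m) + 1/2) ^ 2"
    unfolding Suc.IH Gamma by (simp add: field_simps power2_eq_square)
  finally show ?case .
qed

lemma turan_majorant_at_zero: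
  "turan_majorant n 0 =
     (if odd n
      then 4 ^ (n + 1) / (2 * pi) * ((2 * real n + 3) / (real n + 1)) * (Gamma (real n / 2 + 1))^2
      else 4 ^ (n + 1) / (2 * pi) * (real n + 1) * (Gamma ((real n + 1) / 2))^2)"
proof (cases "odd n")
  case True
  then obtain m where n: "n = Suc (2 * m)" by (metis oddE Suc_eq_plus1)
  have "2 * Suc m = Suc n" "real (Suc m) + 1/2 = real n / 2 + 1"
    using n by (simp_all add: field_simps)
  then have H: "hermite (Suc n) 0 ^ 2 = 4 ^ (n + 1) / pi * Gamma (real n / 2 + 1) ^ 2"
    using hermite_even_at_zero_squared[of "Suc m"] by (simp only: Suc_eq_plus1)
  have "hermite n 0 = 0" using n hermite_odd_at_zero by simp
  then have "turan_majorant n 0 = hermite (Suc n) 0 ^ 2 + hermite (Suc n) 0 ^ 2 / (2 * real n + 2)"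
    by (simp add: turan_majorant_def turan_h_def)
  also have "\<dots> = 4 ^ (n + 1) / (2 * pi) * ((2 * real n + 3) / (real n + 1))
      * Gamma (real n / 2 + 1) ^ 2"
  proof -
    have "2 * real n + 2 = 2 * (real n + 1)" "2 * real n + 3 = 2 * (real n + 1) + 1" by simp_all
    then show ?thesis unfolding H by (simp add: divide_simps) (simp add: algebra_simps)
  qed
  finally show ?thesis
    using True by simp
next
  case False
  then obtain m where n: "n = 2 * m" by (metis evenE)
  have "real m + 1/2 = (real n + 1) / 2" using n by (simp add: field_simps)
  then have H: "hermite n 0 ^ 2 = 4 ^ n / pi * Gamma ((real n + 1) / 2) ^ 2"
    using hermite_even_at_zero_squared[of m] by (simp only: n)
  have "hermite (Suc n) 0 = 0" using n hermite_odd_at_zero by simp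
  then have "turan_majorant n 0 = 2 * (real n + 1) * hermite n 0 ^ 2"
    by (simp add: turan_majorant_def turan_h_def power2_eq_square)
  also have "\<dots> = 4 ^ (n + 1) / (2 * pi) * (real n + 1) * Gamma ((real n + 1) / 2) ^ 2"
    unfolding H by simp
  finally show ?thesis
    using False by simp
qed

theorem lemma3p2:
  fixes n :: nat
  shows "(\<forall>x::real. turan_h n x > 0) \<and>
         (\<forall>x::real. turan_h n x \<le>
            (if odd n
             then 4 ^ (n + 1) / (2 * pi) * ((2 * real n + 3) / (real n + 1)) * (Gamma (real n / 2 + 1))^2
             else 4 ^ (n + 1) / (2 * pi) * (real n + 1) * (Gamma ((real n + 1) / 2))^2))"
  using turan_h_pos order_trans[OF turan_h_le_majorant turan_majorant_le_at_zero]
  by (simp add: turan_majorant_at_zero)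

end
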